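(* Let $P$ be a polyhedron and $F$ a finite rooted poset. Then $\chi(F)$ is not valid on $P$ if and only if there exist an open subpolyhedron $Q$ of $P$ and a surjective open polyhedral map $f\colon Q\to F$. Moreover, if $P$ is convex, then $Q$ may be chosen to be convex as well.
   Context: A polyhedron is a finite union of convex hulls of finite subsets of some $\mathbb R^d$. An open subpolyhedron of $P$ is $P\setminus R$ with $R\subseteq P$ a polyhedron; $\mathrm{Sub}_o P$ is the Heyting algebra of open subpolyhedra of $P$, and a formula is valid on $P$ iff it is valid on $\mathrm{Sub}_o P$. For an open subpolyhedron $Q$ of $P$, set $\mathrm{Sub}_o Q=\{O\cap Q: O\in\mathrm{Sub}_o P\}$. A function $f\colon Q\to F$ to a poset $F$ is a polyhedral map if $f^{-1}[U]\in\mathrm{Sub}_o Q$ for every upset $U$ of $F$, and it is open if $f[O]$ is an upset of $F$ for every $O\in\mathrm{Sub}_o Q$. For a finite rooted poset $F$, $\chi(F)$ is its Jankov–Fine formula: a frame $G$ validates $\chi(F)$ iff there is no surjective p-morphism (map with $g(\uparrow x)=\uparrow g(x)$) from an upset of $G$ onto $F$. *)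

theory Defs
  imports "HOL-Analysis.Analysis"
begin

definition polyhedron :: "'a::euclidean_space set \<Rightarrow> bool" where
  "polyhedron P \<longleftrightarrow>
     (\<exists>SS. finite SS \<and> (\<forall>S\<in>SS. finite S) \<and> P = \<Union> ((\<lambda>S. convex hull S) ` SS))"

definition SubO :: "'a::euclidean_space set \<Rightarrow> 'a set set" where
  "SubO P = {P - R | R. polyhedron R \<and> R \<subseteq> P}"

definition SubO_rel :: "'a::euclidean_space set \<Rightarrow> 'a set \<Rightarrow> 'a set set" where
  "SubO_rel P Q = {W \<inter> Q | W. W \<in> SubO P}"

datatype 'v fm = Var 'v | Bot | Conj "'v fm" "'v fm" | Disj "'v fm" "'v fm" | Imp "'v fm" "'v fm"

definition Top :: "'v fm" where "Top = Imp Bot Bot"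
definition Iff :: "'v fm \<Rightarrow> 'v fm \<Rightarrow> 'v fm" where "Iff a b = Conj (Imp a b) (Imp b a)"
definition Conjs :: "'v fm list \<Rightarrow> 'v fm" where "Conjs xs = foldr Conj xs Top"

text \<open>Evaluation in the Heyting algebra Sub_o P (implication = largest open
  subpolyhedron c with c \<inter> a \<subseteq> b, i.e. the union of all such).\<close>
fun eval :: "'a::euclidean_space set \<Rightarrow> ('v \<Rightarrow> 'a set) \<Rightarrow> 'v fm \<Rightarrow> 'a set" where
  "eval P v (Var x) = v x"
| "eval P v Bot = {}"
| "eval P v (Conj a b) = eval P v a \<inter> eval P v b"
| "eval P v (Disj a b) = eval P v a \<union> eval P v b"
| "eval P v (Imp a b) = \<Union> {c \<in> SubO P. c \<inter> eval P v a \<subseteq> eval P v b}"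

definition valid_on :: "'a::euclidean_space set \<Rightarrow> 'v fm \<Rightarrow> bool" where
  "valid_on P \<phi> \<longleftrightarrow> (\<forall>v. (\<forall>x. v x \<in> SubO P) \<longrightarrow> eval P v \<phi> = P)"

definition partial_order_on_set :: "'b set \<Rightarrow> ('b \<Rightarrow> 'b \<Rightarrow> bool) \<Rightarrow> bool" where
  "partial_order_on_set F le \<longleftrightarrow>
     (\<forall>x\<in>F. le x x) \<and>
     (\<forall>x\<in>F. \<forall>y\<in>F. le x y \<and> le y x \<longrightarrow> x = y) \<and>
     (\<forall>x\<in>F. \<forall>y\<in>F. \<forall>z\<in>F. le x y \<and> le y z \<longrightarrow> le x z)"

definition is_root :: "'b set \<Rightarrow> ('b \<Rightarrow> 'b \<Rightarrow> bool) \<Rightarrow> 'b \<Rightarrow> bool" where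
  "is_root F le r \<longleftrightarrow> r \<in> F \<and> (\<forall>x\<in>F. le r x)"

definition finite_rooted_poset :: "'b set \<Rightarrow> ('b \<Rightarrow> 'b \<Rightarrow> bool) \<Rightarrow> bool" where
  "finite_rooted_poset F le \<longleftrightarrow> finite F \<and> partial_order_on_set F le \<and> (\<exists>r. is_root F le r)"

definition is_upset :: "'b set \<Rightarrow> ('b \<Rightarrow> 'b \<Rightarrow> bool) \<Rightarrow> 'b set \<Rightarrow> bool" where
  "is_upset F le U \<longleftrightarrow> U \<subseteq> F \<and> (\<forall>x\<in>U. \<forall>y\<in>F. le x y \<longrightarrow> y \<in> U)"

definition Upsets :: "'b set \<Rightarrow> ('b \<Rightarrow> 'b \<Rightarrow> bool) \<Rightarrow> 'b set set" where
  "Upsets F le = {U. is_upset F le U}"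

definition up_imp :: "'b set \<Rightarrow> ('b \<Rightarrow> 'b \<Rightarrow> bool) \<Rightarrow> 'b set \<Rightarrow> 'b set \<Rightarrow> 'b set" where
  "up_imp F le a b = {x\<in>F. \<forall>y\<in>F. le x y \<and> y \<in> a \<longrightarrow> y \<in> b}"

text \<open>The Jankov--Fine formula chi(F) of a finite rooted poset F, given as the
  Jankov formula of the finite subdirectly irreducible Heyting algebra Up(F):
  one variable p_a for each upset a, the conjunction of the diagram
  p_{a\<and>b} \<leftrightarrow> p_a \<and> p_b, p_{a\<or>b} \<leftrightarrow> p_a \<or> p_b,
  p_{a\<rightarrow>b} \<leftrightarrow> (p_a \<rightarrow> p_b), p_0 \<leftrightarrow> \<bottom>, implying p_s where
  s = F minus the root is the second-greatest element of Up(F).\<close>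
definition jankov_clause :: "'b set \<Rightarrow> ('b \<Rightarrow> 'b \<Rightarrow> bool) \<Rightarrow> 'b set \<Rightarrow> 'b set \<Rightarrow> 'b set fm" where
  "jankov_clause F le a b =
     Conj (Iff (Var (a \<inter> b)) (Conj (Var a) (Var b)))
      (Conj (Iff (Var (a \<union> b)) (Disj (Var a) (Var b)))
            (Iff (Var (up_imp F le a b)) (Imp (Var a) (Var b))))"

definition jankov_fine :: "'b set \<Rightarrow> ('b \<Rightarrow> 'b \<Rightarrow> bool) \<Rightarrow> 'b set fm" where
  "jankov_fine F le =
     (let pairs = (SOME xs. distinct xs \<and> set xs = Upsets F le \<times> Upsets F le);
          r = (THE r. is_root F le r)
      in Imp (Conj (Iff (Var {}) Bot) (Conjs (map (\<lambda>(a, b). jankov_clause F le a b) pairs)))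
             (Var (F - {r})))"

definition polyhedral_map ::
  "'a::euclidean_space set \<Rightarrow> 'a set \<Rightarrow> 'b set \<Rightarrow> ('b \<Rightarrow> 'b \<Rightarrow> bool) \<Rightarrow> ('a \<Rightarrow> 'b) \<Rightarrow> bool" where
  "polyhedral_map P Q F le f \<longleftrightarrow>
     f ` Q \<subseteq> F \<and> (\<forall>U. is_upset F le U \<longrightarrow> {x\<in>Q. f x \<in> U} \<in> SubO_rel P Q)"

definition open_map ::
  "'a::euclidean_space set \<Rightarrow> 'a set \<Rightarrow> 'b set \<Rightarrow> ('b \<Rightarrow> 'b \<Rightarrow> bool) \<Rightarrow> ('a \<Rightarrow> 'b) \<Rightarrow> bool" where
  "open_map P Q F le f \<longleftrightarrow> (\<forall>W\<in>SubO_rel P Q. is_upset F le (f ` W))"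

end

theory Submission
  imports Defs
begin

text \<open>If f maps the open subpolyhedron Q openly and polyhedrally onto F, interpreting each
  upset by its preimage satisfies the diagram of the Heyting algebra Up(F) on Q (openness of f
  is what makes implication come out right), while a point mapped to the root refutes the
  conclusion of chi(F).
  Conversely, a point y refuting chi(F) satisfies the diagram on a neighbourhood of the form
  P \<inter> box a b, convex when P is. At each point x of it the upsets interpreted by sets
  containing x form a prime filter of Up(F), hence are the upsets containing a single f(x) \<in> F.
  This f is polyhedral by construction, open because the diagram respects implication, and
  sends y to the root, so its image, an upset, is all of F.\<close>

section \<open>Polyhedra and open subpolyhedra\<close>

lemma polyhedron_iff_Union_polytopes:
  "polyhedron P \<longleftrightarrow> (\<exists>\<P>. finite \<P> \<and> (\<forall>S\<in>\<P>. polytope S) \<and> P = \<Union>\<P>)"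
proof
  assume "polyhedron P"
  then obtain SS where "finite SS" "\<forall>S\<in>SS. finite S" "P = \<Union> ((\<lambda>S. convex hull S) ` SS)"
    unfolding polyhedron_def by blast
  then show "\<exists>\<P>. finite \<P> \<and> (\<forall>S\<in>\<P>. polytope S) \<and> P = \<Union>\<P>"
    by (intro exI[of _ "(\<lambda>S. convex hull S) ` SS"]) (auto simp: polytope_def)
next
  assume "\<exists>\<P>. finite \<P> \<and> (\<forall>S\<in>\<P>. polytope S) \<and> P = \<Union>\<P>"
  then obtain \<P> where \<P>: "finite \<P>" "\<forall>S\<in>\<P>. polytope S" "P = \<Union>\<P>" by blast
  then obtain V where V: "\<forall>S\<in>\<P>. finite (V S) \<and> S = convex hull (V S)"
    unfolding polytope_def by metis
  have "\<P> = (\<lambda>S. convex hull S) ` V ` \<P>"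
    using V by (force simp: image_image)
  then show "polyhedron P"
    unfolding polyhedron_def using \<P> V by (intro exI[of _ "V ` \<P>"]) auto
qed

lemma polyhedron_empty: "polyhedron {}"
  by (auto simp: polyhedron_iff_Union_polytopes)

lemma polyhedron_Un: "polyhedron A \<Longrightarrow> polyhedron B \<Longrightarrow> polyhedron (A \<union> B)"
  unfolding polyhedron_iff_Union_polytopes by (metis Union_Un_distrib finite_UnI Un_iff)

lemma polyhedron_UN: "finite I \<Longrightarrow> (\<And>i. i \<in> I \<Longrightarrow> polyhedron (A i)) \<Longrightarrow> polyhedron (\<Union>i\<in>I. A i)"
  by (induction I rule: finite_induct) (auto intro: polyhedron_empty polyhedron_Un)

lemma polyhedron_Int_convex_polyhedron:
  assumes "polyhedron P" and "Polytope.polyhedron H"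
  shows "polyhedron (P \<inter> H)"
proof -
  obtain \<P> where \<P>: "finite \<P>" "\<forall>S\<in>\<P>. polytope S" "P = \<Union>\<P>"
    using assms(1) unfolding polyhedron_iff_Union_polytopes by blast
  have "\<forall>S\<in>(\<lambda>S. S \<inter> H) ` \<P>. polytope S"
    using \<P>(2) assms(2) by (auto intro: polytope_Int_polyhedron)
  moreover have "P \<inter> H = \<Union> ((\<lambda>S. S \<inter> H) ` \<P>)"
    using \<P>(3) by blast
  ultimately show ?thesis
    unfolding polyhedron_iff_Union_polytopes using \<P>(1) by blast
qed

lemma closed_polyhedron: "polyhedron P \<Longrightarrow> closed P"
  unfolding polyhedron_iff_Union_polytopes
  by (metis closed_Union compact_imp_closed polytope_imp_compact)

lemma polyhedron_Diff_box:
  fixes a b :: "'a::euclidean_space"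
  assumes "polyhedron P"
  shows "polyhedron (P - box a b)"
proof -
  have "P - box a b =
      (\<Union>i\<in>Basis. P \<inter> {x. i \<bullet> x \<le> i \<bullet> a} \<union> P \<inter> {x. i \<bullet> x \<ge> i \<bullet> b})"
    by (auto simp: mem_box inner_commute) (meson not_less)+
  then show ?thesis
    using assms by (auto intro!: polyhedron_UN polyhedron_Un polyhedron_Int_convex_polyhedron
        polyhedron_halfspace_le polyhedron_halfspace_ge)
qed

lemma SubO_subset: "W \<in> SubO P \<Longrightarrow> W \<subseteq> P"
  unfolding SubO_def by auto

lemma SubO_self: "P \<in> SubO P"
  unfolding SubO_def using polyhedron_empty by force

lemma SubO_Int:
  assumes "A \<in> SubO P" "B \<in> SubO P"
  shows "A \<inter> B \<in> SubO P"
proof -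
  obtain R1 R2 where "A = P - R1" "B = P - R2" "polyhedron R1" "polyhedron R2" "R1 \<subseteq> P" "R2 \<subseteq> P"
    using assms unfolding SubO_def by auto
  then show ?thesis
    unfolding SubO_def by (intro CollectI exI[of _ "R1 \<union> R2"]) (auto intro: polyhedron_Un)
qed

lemma Int_box_in_SubO: "polyhedron P \<Longrightarrow> P \<inter> box a b \<in> SubO P"
  unfolding SubO_def by (auto intro!: exI[of _ "P - box a b"] polyhedron_Diff_box)

lemma SubO_rel_subset_SubO: "Q \<in> SubO P \<Longrightarrow> SubO_rel P Q \<subseteq> SubO P"
  unfolding SubO_rel_def by (auto intro: SubO_Int)

lemma SubO_rel_self: "Q \<in> SubO P \<Longrightarrow> Q \<in> SubO_rel P Q"
  unfolding SubO_rel_def using SubO_self SubO_subset by blast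

text \<open>Boxes rather than balls, so that the trace on P of a box is again an open
  subpolyhedron, convex whenever P is.\<close>
lemma SubO_box_neighbourhood:
  assumes "c \<in> SubO P" "y \<in> c"
  obtains a b where "y \<in> box a b" "P \<inter> box a b \<subseteq> c"
proof -
  obtain R where R: "c = P - R" "polyhedron R"
    using assms(1) unfolding SubO_def by auto
  have "open (- R)" "y \<in> - R"
    using closed_polyhedron[OF R(2)] assms(2) R(1) by auto
  then obtain a b where "box a b \<subseteq> - R" "y \<in> box a b"
    using open_contains_box by metis
  then show thesis
    using that R(1) by blast
qed

section \<open>Evaluation in the algebra of open subpolyhedra\<close>

lemma eval_Imp_subset: "eval P v (Imp A B) \<subseteq> P"
  using SubO_subset by auto

lemma mem_eval_ImpI:
  "c \<in> SubO P \<Longrightarrow> y \<in> c \<Longrightarrow> c \<inter> eval P v A \<subseteq> eval P v B \<Longrightarrow> y \<in> eval P v (Imp A B)"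
  by auto

lemma mem_eval_ImpD: "y \<in> eval P v (Imp A B) \<Longrightarrow> y \<in> eval P v A \<Longrightarrow> y \<in> eval P v B"
  by auto

lemma eval_Imp_eq_top:
  assumes "eval P v A \<subseteq> eval P v B"
  shows "eval P v (Imp A B) = P"
proof
  show "P \<subseteq> eval P v (Imp A B)"
    using assms mem_eval_ImpI[OF SubO_self] by blast
qed (rule eval_Imp_subset)

lemma eval_Top: "eval P v Top = P"
  unfolding Top_def by (rule eval_Imp_eq_top) simp

lemma eval_Iff_subset: "eval P v (Iff A B) \<subseteq> P"
  unfolding Iff_def using eval_Imp_subset by (metis eval.simps(3) le_infI1)

lemma mem_eval_IffD: "y \<in> eval P v (Iff A B) \<Longrightarrow> y \<in> eval P v A \<longleftrightarrow> y \<in> eval P v B"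
  unfolding Iff_def by (metis IntE eval.simps(3) mem_eval_ImpD)

lemma SubO_subset_eval_Iff:
  assumes "W \<in> SubO P" "W \<inter> eval P v A = W \<inter> eval P v B"
  shows "W \<subseteq> eval P v (Iff A B)"
proof -
  have "W \<subseteq> eval P v (Imp A B)" "W \<subseteq> eval P v (Imp B A)"
    using assms by (blast intro: mem_eval_ImpI[of W])+
  then show ?thesis
    unfolding Iff_def by simp
qed

lemma eval_Conjs: "eval P v (Conjs xs) = P \<inter> (\<Inter>\<phi>\<in>set xs. eval P v \<phi>)"
proof (induction xs)
  case Nil
  then show ?case by (simp add: Conjs_def eval_Top)
next
  case (Cons \<phi> xs)
  then show ?case by (simp add: Conjs_def) blast
qed

lemma eval_locally_SubO:
  assumes "\<And>p. v p \<in> SubO P" and "y \<in> eval P v \<phi>"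
  shows "\<exists>c\<in>SubO P. y \<in> c \<and> c \<subseteq> eval P v \<phi>"
  using assms(2)
proof (induction \<phi> arbitrary: y)
  case (Var p)
  then show ?case using assms(1) by (intro bexI[of _ "v p"]) simp_all
next
  case Bot
  then show ?case by simp
next
  case (Conj \<phi> \<psi>)
  then have "y \<in> eval P v \<phi>" "y \<in> eval P v \<psi>"
    by simp_all
  then obtain c d where "c \<in> SubO P" "y \<in> c" "c \<subseteq> eval P v \<phi>"
    and "d \<in> SubO P" "y \<in> d" "d \<subseteq> eval P v \<psi>"
    using Conj.IH by blast
  moreover have "c \<inter> d \<in> SubO P"
    using \<open>c \<in> SubO P\<close> \<open>d \<in> SubO P\<close> by (rule SubO_Int)
  ultimately show ?case
    by (metis IntI eval.simps(3) Int_mono)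
next
  case (Disj \<phi> \<psi>)
  have "eval P v \<phi> \<subseteq> eval P v (Disj \<phi> \<psi>)" "eval P v \<psi> \<subseteq> eval P v (Disj \<phi> \<psi>)"
    by simp_all
  moreover have "y \<in> eval P v \<phi> \<or> y \<in> eval P v \<psi>"
    using Disj.prems by simp
  ultimately show ?case
    using Disj.IH by (meson order_trans)
next
  case (Imp \<phi> \<psi>)
  from Imp.prems obtain c where "c \<in> SubO P" "y \<in> c" "c \<inter> eval P v \<phi> \<subseteq> eval P v \<psi>"
    by (simp only: eval.simps) blast
  then have "c \<subseteq> eval P v (Imp \<phi> \<psi>)"
    using mem_eval_ImpI[of c] by blast
  then show ?case
    using \<open>c \<in> SubO P\<close> \<open>y \<in> c\<close> by blast
qed

section \<open>Upsets of a finite poset\<close>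

definition principal_upset :: "'b set \<Rightarrow> ('b \<Rightarrow> 'b \<Rightarrow> bool) \<Rightarrow> 'b \<Rightarrow> 'b set" where
  "principal_upset F le z = {u\<in>F. le z u}"

lemma is_upset_Int: "is_upset F le a \<Longrightarrow> is_upset F le b \<Longrightarrow> is_upset F le (a \<inter> b)"
  unfolding is_upset_def by auto

lemma is_upset_Un: "is_upset F le a \<Longrightarrow> is_upset F le b \<Longrightarrow> is_upset F le (a \<union> b)"
  unfolding is_upset_def by auto

lemma is_upset_empty: "is_upset F le {}"
  unfolding is_upset_def by auto

lemma is_upset_self: "is_upset F le F"
  unfolding is_upset_def by auto

lemma is_upset_up_imp:
  "partial_order_on_set F le \<Longrightarrow> is_upset F le (up_imp F le a b)"
  unfolding is_upset_def up_imp_def partial_order_on_set_def by blast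

lemma is_upset_principal_upset:
  "partial_order_on_set F le \<Longrightarrow> z \<in> F \<Longrightarrow> is_upset F le (principal_upset F le z)"
  unfolding is_upset_def principal_upset_def partial_order_on_set_def by blast

lemma is_upset_principal_upset_minus:
  "partial_order_on_set F le \<Longrightarrow> z \<in> F \<Longrightarrow> is_upset F le (principal_upset F le z - {z})"
  unfolding is_upset_def principal_upset_def partial_order_on_set_def by blast

lemma is_upset_minus_root:
  "partial_order_on_set F le \<Longrightarrow> is_root F le r \<Longrightarrow> is_upset F le (F - {r})"
  unfolding is_upset_def is_root_def partial_order_on_set_def by blast

lemma principal_upset_subset_upset:
  "is_upset F le a \<Longrightarrow> z \<in> a \<Longrightarrow> principal_upset F le z \<subseteq> a"
  unfolding is_upset_def principal_upset_def by blast

lemma mem_principal_upset_self: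
  "partial_order_on_set F le \<Longrightarrow> z \<in> F \<Longrightarrow> z \<in> principal_upset F le z"
  unfolding principal_upset_def partial_order_on_set_def by blast

lemma finite_Upsets: "finite F \<Longrightarrow> finite (Upsets F le)"
  unfolding Upsets_def is_upset_def by (simp add: finite_subset[of _ "Pow F"] subset_eq)

lemma upset_has_minimal:
  assumes po: "partial_order_on_set F le" and "finite F" "is_upset F le m" "m \<noteq> {}"
  obtains z where "z \<in> m" "is_upset F le (m - {z})"
proof -
  have "finite m"
    using assms(2,3) finite_subset unfolding is_upset_def by blast
  then have "finite (principal_upset F le ` m)" "principal_upset F le ` m \<noteq> {}"
    using assms(4) by simp_all
  then obtain z where z: "z \<in> m"
    and max: "\<And>w. w \<in> m \<Longrightarrow> principal_upset F le z \<subseteq> principal_upset F le w \<Longrightarrow>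
                   principal_upset F le z = principal_upset F le w"
    using finite_has_maximal[of "principal_upset F le ` m"] by blast
  have "w = z" if "w \<in> m" "le w z" for w
  proof -
    have "w \<in> F" "z \<in> F"
      using that z assms(3) unfolding is_upset_def by auto
    then have "principal_upset F le z \<subseteq> principal_upset F le w"
      using po that(2) unfolding principal_upset_def partial_order_on_set_def by blast
    then have "w \<in> principal_upset F le z"
      using max[OF that(1)] mem_principal_upset_self[OF po \<open>w \<in> F\<close>] by blast
    then have "le z w"
      unfolding principal_upset_def by simp
    then show "w = z"
      using po that(2) \<open>w \<in> F\<close> \<open>z \<in> F\<close> unfolding partial_order_on_set_def by blast
  qed
  then have "is_upset F le (m - {z})"
    using assms(3) unfolding is_upset_def by (metis Diff_iff Diff_subset order_trans singletonD)
  then show thesis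
    using that z by blast
qed

text \<open>A prime filter of the lattice of upsets of a finite poset consists of the upsets
  containing one point z: its least element m splits as the principal upset of a minimal
  z \<in> m joined with the smaller upset m - {z}, so primeness puts the former in the filter.\<close>
lemma prime_filter_of_upsets_is_principal:
  assumes po: "partial_order_on_set F le" and "finite F"
    and "\<not> \<Phi> {}" "\<Phi> F"
    and Int: "\<And>a b. is_upset F le a \<Longrightarrow> is_upset F le b \<Longrightarrow> \<Phi> (a \<inter> b) \<longleftrightarrow> \<Phi> a \<and> \<Phi> b"
    and Un: "\<And>a b. is_upset F le a \<Longrightarrow> is_upset F le b \<Longrightarrow> \<Phi> (a \<union> b) \<longleftrightarrow> \<Phi> a \<or> \<Phi> b"
  obtains z where "z \<in> F" "\<And>a. is_upset F le a \<Longrightarrow> \<Phi> a \<longleftrightarrow> z \<in> a"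
proof -
  define S where "S = {a \<in> Upsets F le. \<Phi> a}"
  have "finite S" "S \<noteq> {}"
    using finite_Upsets[OF \<open>finite F\<close>] is_upset_self \<open>\<Phi> F\<close> unfolding S_def Upsets_def by auto
  then obtain m where "m \<in> S" and min: "\<And>a. a \<in> S \<Longrightarrow> a \<subseteq> m \<Longrightarrow> m = a"
    using finite_has_minimal[of S] by blast
  then have m: "is_upset F le m" "\<Phi> m"
    unfolding S_def Upsets_def by auto
  have least: "m \<subseteq> a" if "is_upset F le a" "\<Phi> a" for a
  proof -
    have "a \<inter> m \<in> S"
      using that m Int is_upset_Int unfolding S_def Upsets_def by blast
    then show ?thesis
      using min[of "a \<inter> m"] by blast
  qed
  have "m \<noteq> {}"
    using m \<open>\<not> \<Phi> {}\<close> by auto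
  then obtain z where z: "z \<in> m" "is_upset F le (m - {z})"
    using upset_has_minimal[OF po \<open>finite F\<close> m(1)] by blast
  have "z \<in> F"
    using z(1) m(1) unfolding is_upset_def by blast
  have up_z: "is_upset F le (principal_upset F le z)"
    using is_upset_principal_upset[OF po \<open>z \<in> F\<close>] .
  have "principal_upset F le z \<union> (m - {z}) = m"
    using principal_upset_subset_upset[OF m(1) z(1)] mem_principal_upset_self[OF po \<open>z \<in> F\<close>] z(1)
    by blast
  moreover have "\<not> \<Phi> (m - {z})"
    using least[OF z(2)] z(1) by blast
  ultimately have "\<Phi> (principal_upset F le z)"
    using Un[OF up_z z(2)] m(2) by simp
  then have "\<Phi> a \<longleftrightarrow> z \<in> a" if "is_upset F le a" for a
    using least[OF that] z(1) Int[OF up_z that] principal_upset_subset_upset[OF that]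
    by (metis Int_absorb2 subsetD)
  then show thesis
    using that \<open>z \<in> F\<close> by blast
qed

section \<open>The diagram in the Jankov--Fine formula\<close>

definition jankov_diagram :: "'b set \<Rightarrow> ('b \<Rightarrow> 'b \<Rightarrow> bool) \<Rightarrow> 'b set fm" where
  "jankov_diagram F le =
     Conj (Iff (Var {}) Bot)
       (Conjs (map (\<lambda>(a, b). jankov_clause F le a b)
          (SOME xs. distinct xs \<and> set xs = Upsets F le \<times> Upsets F le)))"

lemma jankov_fine_eq_Imp_diagram:
  assumes "partial_order_on_set F le" "is_root F le r"
  shows "jankov_fine F le = Imp (jankov_diagram F le) (Var (F - {r}))"
proof -
  have "(THE r. is_root F le r) = r"
    using assms unfolding is_root_def partial_order_on_set_def by (intro the_equality) blast+
  then show ?thesis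
    unfolding jankov_fine_def jankov_diagram_def Let_def by simp
qed

lemma eval_jankov_diagram:
  assumes "finite F"
  shows "eval P v (jankov_diagram F le) =
    eval P v (Iff (Var {}) Bot) \<inter>
    (\<Inter>a\<in>Upsets F le. \<Inter>b\<in>Upsets F le. eval P v (jankov_clause F le a b))"
proof -
  define pairs where "pairs = (SOME xs. distinct xs \<and> set xs = Upsets F le \<times> Upsets F le)"
  have "finite (Upsets F le \<times> Upsets F le)"
    using finite_Upsets[OF assms] by simp
  then have "\<exists>xs. distinct xs \<and> set xs = Upsets F le \<times> Upsets F le"
    by (metis finite_distinct_list)
  then have "set pairs = Upsets F le \<times> Upsets F le"
    unfolding pairs_def by (rule someI2_ex) simp
  then have "(\<Inter>\<phi>\<in>set (map (\<lambda>(a, b). jankov_clause F le a b) pairs). eval P v \<phi>) =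
      (\<Inter>a\<in>Upsets F le. \<Inter>b\<in>Upsets F le. eval P v (jankov_clause F le a b))"
    unfolding set_map by auto
  moreover have "eval P v (Iff (Var {}) Bot) \<subseteq> P"
    by (rule eval_Iff_subset)
  ultimately show ?thesis
    unfolding jankov_diagram_def pairs_def[symmetric] eval.simps(3) eval_Conjs by blast
qed

lemma mem_eval_jankov_clauseD:
  assumes "x \<in> eval P v (jankov_clause F le a b)"
  shows "x \<in> v (a \<inter> b) \<longleftrightarrow> x \<in> v a \<and> x \<in> v b"
    and "x \<in> v (a \<union> b) \<longleftrightarrow> x \<in> v a \<or> x \<in> v b"
    and "x \<in> v (up_imp F le a b) \<longleftrightarrow> x \<in> eval P v (Imp (Var a) (Var b))"
  using assms unfolding jankov_clause_def eval.simps(3)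
  by (auto dest!: mem_eval_IffD simp del: eval.simps(5))

lemma SubO_subset_eval_jankov_clause:
  assumes "W \<in> SubO P"
    and "W \<inter> v (a \<inter> b) = W \<inter> (v a \<inter> v b)"
    and "W \<inter> v (a \<union> b) = W \<inter> (v a \<union> v b)"
    and "W \<inter> v (up_imp F le a b) = W \<inter> eval P v (Imp (Var a) (Var b))"
  shows "W \<subseteq> eval P v (jankov_clause F le a b)"
proof -
  have "W \<subseteq> eval P v (Iff (Var (a \<inter> b)) (Conj (Var a) (Var b)))"
    "W \<subseteq> eval P v (Iff (Var (a \<union> b)) (Disj (Var a) (Var b)))"
    "W \<subseteq> eval P v (Iff (Var (up_imp F le a b)) (Imp (Var a) (Var b)))"
    using assms by (simp_all only: SubO_subset_eval_Iff eval.simps(1,3,4))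
  then show ?thesis
    unfolding jankov_clause_def eval.simps(3) by blast
qed

lemma up_imp_self: "up_imp F le F F = F"
  by (auto simp: up_imp_def)

lemma jankov_diagram_point:
  assumes po: "partial_order_on_set F le" and fin: "finite F"
    and x: "x \<in> eval P v (jankov_diagram F le)"
  obtains z where "z \<in> F" "\<And>a. is_upset F le a \<Longrightarrow> x \<in> v a \<longleftrightarrow> z \<in> a"
proof -
  have x0: "x \<in> eval P v (Iff (Var {}) Bot)"
    and clause: "\<And>a b. is_upset F le a \<Longrightarrow> is_upset F le b \<Longrightarrow> x \<in> eval P v (jankov_clause F le a b)"
    using x unfolding eval_jankov_diagram[OF fin] Upsets_def by (simp_all del: eval.simps)
  have "x \<notin> v {}"
    using mem_eval_IffD[OF x0] by simp
  have "eval P v (Imp (Var F) (Var F)) = P"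
    by (rule eval_Imp_eq_top) simp
  moreover have "x \<in> P"
    using x0 eval_Iff_subset by blast
  ultimately have "x \<in> v F"
    using mem_eval_jankov_clauseD(3)[OF clause[OF is_upset_self is_upset_self]]
    by (simp only: up_imp_self eval.simps(1))
  show thesis
    by (rule prime_filter_of_upsets_is_principal[OF po fin, of "\<lambda>a. x \<in> v a"])
      (use \<open>x \<notin> v {}\<close> \<open>x \<in> v F\<close> mem_eval_jankov_clauseD(1,2)[OF clause] that in auto)
qed

section \<open>Open polyhedral maps onto F\<close>

lemma polyhedral_map_of_valuation:
  assumes "\<And>p. v p \<in> SubO P" "f ` Q \<subseteq> F"
    and "\<And>x a. x \<in> Q \<Longrightarrow> is_upset F le a \<Longrightarrow> x \<in> v a \<longleftrightarrow> f x \<in> a"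
  shows "polyhedral_map P Q F le f"
  unfolding polyhedral_map_def
proof (intro conjI allI impI)
  fix U assume "is_upset F le U"
  then have "{x\<in>Q. f x \<in> U} = v U \<inter> Q"
    using assms(3) by auto
  then show "{x\<in>Q. f x \<in> U} \<in> SubO_rel P Q"
    unfolding SubO_rel_def using assms(1) by blast
qed (rule assms(2))

text \<open>The preimage valuation of an open map interprets Heyting implication correctly on Q:
  f x lies in the implication upset iff some neighbourhood of x witnesses it, since the image of
  that neighbourhood is an upset containing f x.\<close>
lemma preimage_up_imp_eq_eval_Imp:
  assumes po: "partial_order_on_set F le" and Q: "Q \<in> SubO P"
    and om: "open_map P Q F le f" and "f ` Q \<subseteq> F"
    and v: "\<And>p. v p \<in> SubO P" "\<And>a. is_upset F le a \<Longrightarrow> v a = {x\<in>Q. f x \<in> a}"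
    and ab: "is_upset F le a" "is_upset F le b"
  shows "Q \<inter> v (up_imp F le a b) = Q \<inter> eval P v (Imp (Var a) (Var b))"
proof (intro equalityI subsetI)
  fix x assume "x \<in> Q \<inter> v (up_imp F le a b)"
  moreover have "v (up_imp F le a b) \<inter> v a \<subseteq> v b"
    using v(2) ab is_upset_up_imp[OF po] po \<open>f ` Q \<subseteq> F\<close>
    unfolding up_imp_def partial_order_on_set_def by auto
  ultimately show "x \<in> Q \<inter> eval P v (Imp (Var a) (Var b))"
    using mem_eval_ImpI[OF v(1), of x "up_imp F le a b" v "Var a" "Var b"] by simp
next
  fix x assume x: "x \<in> Q \<inter> eval P v (Imp (Var a) (Var b))"
  then obtain c where c: "c \<in> SubO P" "x \<in> c" "c \<inter> v a \<subseteq> v b"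
    by (simp only: Int_iff eval.simps) blast
  have "c \<inter> Q \<in> SubO_rel P Q"
    unfolding SubO_rel_def using c(1) by blast
  then have up: "is_upset F le (f ` (c \<inter> Q))"
    using om unfolding open_map_def by blast
  have "u \<in> b" if "u \<in> F" "le (f x) u" "u \<in> a" for u
  proof -
    have "u \<in> f ` (c \<inter> Q)"
      using up that x c(2) unfolding is_upset_def by blast
    then show "u \<in> b"
      using c(3) that(3) v(2) ab by auto
  qed
  then show "x \<in> Q \<inter> v (up_imp F le a b)"
    using x \<open>f ` Q \<subseteq> F\<close> v(2)[OF is_upset_up_imp[OF po]] unfolding up_imp_def by auto
qed

lemma not_valid_jankov_fine_if_open_polyhedral_map:
  assumes fr: "finite_rooted_poset F le" and Q: "Q \<in> SubO P"
    and pm: "polyhedral_map P Q F le f" and om: "open_map P Q F le f" and "f ` Q = F"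
  shows "\<not> valid_on P (jankov_fine F le)"
proof
  assume valid: "valid_on P (jankov_fine F le)"
  obtain r where po: "partial_order_on_set F le" and fin: "finite F" and r: "is_root F le r"
    using fr unfolding finite_rooted_poset_def by blast
  define v where "v a = (if is_upset F le a then {x\<in>Q. f x \<in> a} else Q)" for a
  have v_upset: "v a = {x\<in>Q. f x \<in> a}" if "is_upset F le a" for a
    using that unfolding v_def by simp
  have v_SubO: "v a \<in> SubO P" for a
  proof (cases "is_upset F le a")
    case True
    then obtain W where "W \<in> SubO P" "v a = W \<inter> Q"
      using pm v_upset unfolding polyhedral_map_def SubO_rel_def by auto
    then show ?thesis
      using SubO_Int[OF _ Q] by simp
  qed (simp add: v_def Q)
  have "Q \<subseteq> eval P v (Iff (Var {}) Bot)"
    using v_upset[OF is_upset_empty] by (intro SubO_subset_eval_Iff[OF Q]) simp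
  moreover have "Q \<subseteq> eval P v (jankov_clause F le a b)"
    if ab: "is_upset F le a" "is_upset F le b" for a b
  proof (rule SubO_subset_eval_jankov_clause[OF Q])
    show "Q \<inter> v (a \<inter> b) = Q \<inter> (v a \<inter> v b)" "Q \<inter> v (a \<union> b) = Q \<inter> (v a \<union> v b)"
      using v_upset ab is_upset_Int[OF ab] is_upset_Un[OF ab] by auto
    show "Q \<inter> v (up_imp F le a b) = Q \<inter> eval P v (Imp (Var a) (Var b))"
      using preimage_up_imp_eq_eval_Imp[OF po Q om _ v_SubO v_upset ab] \<open>f ` Q = F\<close> by simp
  qed
  ultimately have "Q \<subseteq> eval P v (jankov_diagram F le)"
    unfolding eval_jankov_diagram[OF fin] Upsets_def by (auto simp del: eval.simps)
  moreover obtain q where q: "q \<in> Q" "f q = r"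
    using \<open>f ` Q = F\<close> r unfolding is_root_def by blast
  moreover have "eval P v (Imp (jankov_diagram F le) (Var (F - {r}))) = P"
    using valid v_SubO unfolding valid_on_def jankov_fine_eq_Imp_diagram[OF po r] by blast
  ultimately have "q \<in> v (F - {r})"
    using mem_eval_ImpD SubO_subset[OF Q] by (metis eval.simps(1) subsetD)
  then show False
    using v_upset[OF is_upset_minus_root[OF po r]] q by simp
qed

text \<open>If z lay above f y but outside f(W), the point y would force the implication from
  the principal upset of z to the same upset without z, although W witnesses it.\<close>
lemma open_map_of_jankov_diagram:
  assumes po: "partial_order_on_set F le" and fin: "finite F"
    and Q: "Q \<in> SubO P" "Q \<subseteq> eval P v (jankov_diagram F le)" and "f ` Q \<subseteq> F"
    and fv: "\<And>x a. x \<in> Q \<Longrightarrow> is_upset F le a \<Longrightarrow> x \<in> v a \<longleftrightarrow> f x \<in> a"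
  shows "open_map P Q F le f"
  unfolding open_map_def is_upset_def
proof (intro ballI conjI impI)
  fix W assume "W \<in> SubO_rel P Q"
  then have W: "W \<in> SubO P" "W \<subseteq> Q"
    using SubO_rel_subset_SubO[OF Q(1)] unfolding SubO_rel_def by auto
  then show "f ` W \<subseteq> F"
    using \<open>f ` Q \<subseteq> F\<close> by auto
  fix fy z assume "fy \<in> f ` W" "z \<in> F" "le fy z"
  then obtain y where y: "y \<in> W" "f y = fy"
    by auto
  have "y \<in> Q"
    using y(1) W(2) by auto
  show "z \<in> f ` W"
  proof (rule ccontr)
    assume z: "z \<notin> f ` W"
    define a where "a = principal_upset F le z"
    define b where "b = principal_upset F le z - {z}"
    have ab: "is_upset F le a" "is_upset F le b"
      unfolding a_def b_def
      using is_upset_principal_upset[OF po \<open>z \<in> F\<close>] is_upset_principal_upset_minus[OF po \<open>z \<in> F\<close>]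
      by simp_all
    have "W \<inter> v a \<subseteq> v b"
    proof
      fix x assume "x \<in> W \<inter> v a"
      then have "x \<in> Q" "f x \<in> a" "f x \<noteq> z"
        using fv[OF _ ab(1)] W(2) z by auto
      then show "x \<in> v b"
        using fv[OF _ ab(2)] unfolding a_def b_def by auto
    qed
    then have "y \<in> eval P v (Imp (Var a) (Var b))"
      by (intro mem_eval_ImpI[OF W(1) y(1)]) simp
    moreover have "y \<in> eval P v (jankov_clause F le a b)"
      using Q(2) \<open>y \<in> Q\<close> ab unfolding eval_jankov_diagram[OF fin] Upsets_def by (auto simp del: eval.simps)
    ultimately have "y \<in> v (up_imp F le a b)"
      using mem_eval_jankov_clauseD(3) by blast
    then have "f y \<in> up_imp F le a b"
      using fv[OF \<open>y \<in> Q\<close> is_upset_up_imp[OF po]] by simp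
    moreover have "z \<in> a"
      unfolding a_def using mem_principal_upset_self[OF po \<open>z \<in> F\<close>] .
    ultimately have "z \<in> b"
      using \<open>le fy z\<close> \<open>z \<in> F\<close> y(2) unfolding up_imp_def by auto
    then show False
      unfolding b_def by simp
  qed
qed

lemma open_map_image_eq:
  assumes "open_map P Q F le f" "Q \<in> SubO P" "f ` Q \<subseteq> F" "is_root F le r" "r \<in> f ` Q"
  shows "f ` Q = F"
proof -
  have "is_upset F le (f ` Q)"
    using assms(1) SubO_rel_self[OF assms(2)] unfolding open_map_def by blast
  then show ?thesis
    using assms(3-5) unfolding is_upset_def is_root_def by blast
qed

lemma jankov_diagram_point_map:
  assumes po: "partial_order_on_set F le" and fin: "finite F"
    and "Q \<subseteq> eval P v (jankov_diagram F le)"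
  obtains f where "f ` Q \<subseteq> F" "\<And>x a. x \<in> Q \<Longrightarrow> is_upset F le a \<Longrightarrow> x \<in> v a \<longleftrightarrow> f x \<in> a"
proof -
  have "\<forall>x\<in>Q. \<exists>z. z \<in> F \<and> (\<forall>a. is_upset F le a \<longrightarrow> x \<in> v a \<longleftrightarrow> z \<in> a)"
  proof
    fix x assume "x \<in> Q"
    then obtain z where "z \<in> F" "\<And>a. is_upset F le a \<Longrightarrow> x \<in> v a \<longleftrightarrow> z \<in> a"
      using jankov_diagram_point[OF po fin] assms(3) by blast
    then show "\<exists>z. z \<in> F \<and> (\<forall>a. is_upset F le a \<longrightarrow> x \<in> v a \<longleftrightarrow> z \<in> a)"
      by blast
  qed
  then obtain f where "\<forall>x\<in>Q. f x \<in> F \<and> (\<forall>a. is_upset F le a \<longrightarrow> x \<in> v a \<longleftrightarrow> f x \<in> a)"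
    by (metis bchoice)
  then show thesis
    using that by blast
qed

lemma open_polyhedral_map_if_not_valid_jankov_fine:
  fixes P :: "'a::euclidean_space set"
  assumes P: "polyhedron P" and fr: "finite_rooted_poset F le"
    and "\<not> valid_on P (jankov_fine F le)"
  obtains Q and f :: "'a \<Rightarrow> 'b" where "Q \<in> SubO P" "convex P \<longrightarrow> convex Q"
    "polyhedral_map P Q F le f" "open_map P Q F le f" "f ` Q = F"
proof -
  obtain r where po: "partial_order_on_set F le" and fin: "finite F" and r: "is_root F le r"
    using fr unfolding finite_rooted_poset_def by blast
  let ?D = "jankov_diagram F le"
  obtain v where v: "\<And>p. v p \<in> SubO P" and "eval P v (Imp ?D (Var (F - {r}))) \<noteq> P"
    using assms(3) unfolding valid_on_def jankov_fine_eq_Imp_diagram[OF po r] by blast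
  then have "\<not> eval P v ?D \<subseteq> v (F - {r})"
    using eval_Imp_eq_top[of P v ?D "Var (F - {r})"] by (simp only: eval.simps(1)) blast
  then obtain y where y: "y \<in> eval P v ?D" "y \<notin> v (F - {r})"
    by blast
  obtain c where c: "c \<in> SubO P" "y \<in> c" "c \<subseteq> eval P v ?D"
    using eval_locally_SubO[OF v y(1)] by blast
  obtain a b where "y \<in> box a b" "P \<inter> box a b \<subseteq> c"
    using SubO_box_neighbourhood[OF c(1,2)] .
  define Q where "Q = P \<inter> box a b"
  have "y \<in> P"
    using SubO_subset[OF c(1)] c(2) by blast
  then have Q: "Q \<in> SubO P" "y \<in> Q" "Q \<subseteq> eval P v ?D" "convex P \<longrightarrow> convex Q"
    unfolding Q_def using Int_box_in_SubO[OF P] \<open>y \<in> box a b\<close> \<open>P \<inter> box a b \<subseteq> c\<close> c(3)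
    by (simp_all add: convex_Int)
  obtain f where fQ: "f ` Q \<subseteq> F" and fv: "\<And>x a. x \<in> Q \<Longrightarrow> is_upset F le a \<Longrightarrow> x \<in> v a \<longleftrightarrow> f x \<in> a"
    using jankov_diagram_point_map[OF po fin Q(3)] by blast
  have om: "open_map P Q F le f"
    using open_map_of_jankov_diagram[OF po fin Q(1,3) fQ fv] .
  have "f y = r"
    using fQ fv[OF Q(2) is_upset_minus_root[OF po r]] Q(2) y(2) by blast
  then have "f ` Q = F"
    using open_map_image_eq[OF om Q(1) fQ r] Q(2) by blast
  then show thesis
    using that Q(1,4) polyhedral_map_of_valuation[OF v fQ fv] om by blast
qed

theorem lemma4p7:
  fixes P :: "'a::euclidean_space set"
    and F :: "'b set" and le :: "'b \<Rightarrow> 'b \<Rightarrow> bool"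
  assumes "polyhedron P"
    and "finite_rooted_poset F le"
  shows "(\<not> valid_on P (jankov_fine F le) \<longleftrightarrow>
            (\<exists>Q (f :: 'a \<Rightarrow> 'b). Q \<in> SubO P \<and> polyhedral_map P Q F le f \<and>
                 open_map P Q F le f \<and> f ` Q = F))
       \<and> (convex P \<longrightarrow> \<not> valid_on P (jankov_fine F le) \<longrightarrow>
            (\<exists>Q (f :: 'a \<Rightarrow> 'b). Q \<in> SubO P \<and> convex Q \<and> polyhedral_map P Q F le f \<and>
                 open_map P Q F le f \<and> f ` Q = F))"
  using open_polyhedral_map_if_not_valid_jankov_fine[OF assms]
    not_valid_jankov_fine_if_open_polyhedral_map[OF assms(2)]
  by metis

end
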